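(* Let $\mathcal{H}$ and $\mathcal{K}$ be finite-dimensional complex Hilbert spaces and let $\mathcal{E}$ be a quantum channel (completely positive trace-preserving linear map) from operators on $\mathcal{H}$ to operators on $\mathcal{K}$, with adjoint $\mathcal{E}^\dagger$. Let $A(0)=\sum_i a_i(0)\,\Pi_i(0)$ be a Hermitian operator on $\mathcal{H}$ and $B(t)=\sum_f b_f(t)\,\Xi_f(t)$ a Hermitian operator on $\mathcal{K}$, written in their spectral decompositions (so $\{\Pi_i(0)\}_i$ and $\{\Xi_f(t)\}_f$ are families of mutually orthogonal projectors summing to the identity). Suppose that $[\Pi_i(0),\mathcal{E}^\dagger(\Xi_f(t))]\neq 0$ for some pair $(i,f)$. Then there exists no family of functions $\rho\mapsto p_{if}(\rho)$, defined on all density operators $\rho$ on $\mathcal{H}$ and taking values in $[0,\infty)$ (i.e. each $(p_{if}(\rho))_{i,f}$ is a probability distribution), satisfying both: (a) correct marginals: for all $\rho$, $\sum_f p_{if}(\rho)=\mathrm{Tr}(\Pi_i(0)\rho)$ for every $i$ and $\sum_i p_{if}(\rho)=\mathrm{Tr}(\Xi_f(t)\mathcal{E}(\rho))$ for every $f$; (b) convex-linearity: whenever $\rho=\sum_k p_k\rho_k$ is a convex combination of density operators, $p_{if}(\rho)=\sum_k p_k\, p_{if}(\rho_k)$ for all $i,f$.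
   Context: The adjoint $\mathcal{E}^\dagger$ of a channel $\mathcal{E}$ is the linear map defined by $\mathrm{Tr}(X\,\mathcal{E}(Y))=\mathrm{Tr}(\mathcal{E}^\dagger(X)\,Y)$ for all operators $X$ on $\mathcal{K}$ and $Y$ on $\mathcal{H}$; if $\mathcal{E}(\rho)=\sum_k K_k\rho K_k^\dagger$ then $\mathcal{E}^\dagger(X)=\sum_k K_k^\dagger X K_k$. *)

theory Defs
  imports Complex_Main "Jordan_Normal_Form.Matrix"
begin

(* Operators on an n-dimensional Hilbert space = n x n complex matrices (JNF type complex mat). *)

definition tr :: "complex mat \<Rightarrow> complex" where
  "tr M = (\<Sum>i<dim_row M. M $$ (i,i))"

definition adj :: "complex mat \<Rightarrow> complex mat" where
  "adj M = mat (dim_col M) (dim_row M) (\<lambda>(i,j). cnj (M $$ (j,i)))"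

definition hermitian :: "nat \<Rightarrow> complex mat \<Rightarrow> bool" where
  "hermitian n M \<longleftrightarrow> M \<in> carrier_mat n n \<and> adj M = M"

definition psd :: "nat \<Rightarrow> complex mat \<Rightarrow> bool" where
  "psd n M \<longleftrightarrow> hermitian n M \<and>
     (\<forall>v \<in> carrier_vec n. 0 \<le> Re (conjugate v \<bullet> (M *\<^sub>v v)))"

definition density :: "nat \<Rightarrow> complex mat \<Rightarrow> bool" where
  "density n \<rho> \<longleftrightarrow> psd n \<rho> \<and> tr \<rho> = 1"

definition msum :: "nat \<Rightarrow> ('i \<Rightarrow> complex mat) \<Rightarrow> 'i set \<Rightarrow> complex mat" where
  "msum n f S = mat n n (\<lambda>(r,c). \<Sum>i\<in>S. f i $$ (r,c))"

definition projector :: "nat \<Rightarrow> complex mat \<Rightarrow> bool" where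
  "projector n P \<longleftrightarrow> hermitian n P \<and> P * P = P"

definition spectral_decomp ::
    "nat \<Rightarrow> complex mat \<Rightarrow> 'i set \<Rightarrow> ('i \<Rightarrow> real) \<Rightarrow> ('i \<Rightarrow> complex mat) \<Rightarrow> bool" where
  "spectral_decomp n M I a P \<longleftrightarrow>
     finite I \<and> hermitian n M \<and>
     (\<forall>i\<in>I. projector n (P i) \<and> P i \<noteq> 0\<^sub>m n n) \<and>
     (\<forall>i\<in>I. \<forall>j\<in>I. i \<noteq> j \<longrightarrow> P i * P j = 0\<^sub>m n n \<and> a i \<noteq> a j) \<and>
     msum n P I = 1\<^sub>m n \<and>
     M = msum n (\<lambda>i. complex_of_real (a i) \<cdot>\<^sub>m P i) I"

definition lin_map :: "nat \<Rightarrow> nat \<Rightarrow> (complex mat \<Rightarrow> complex mat) \<Rightarrow> bool" where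
  "lin_map n m E \<longleftrightarrow>
     (\<forall>X \<in> carrier_mat n n. E X \<in> carrier_mat m m) \<and>
     (\<forall>X \<in> carrier_mat n n. \<forall>Y \<in> carrier_mat n n. E (X + Y) = E X + E Y) \<and>
     (\<forall>c. \<forall>X \<in> carrier_mat n n. E (c \<cdot>\<^sub>m X) = c \<cdot>\<^sub>m E X)"

(* (E \<otimes> id_k) applied to a (k*n) x (k*n) matrix viewed as a k x k array of n x n blocks
   (block (a,b) occupies rows a*n..a*n+n-1, columns b*n..b*n+n-1) *)
definition ampl :: "(complex mat \<Rightarrow> complex mat) \<Rightarrow> nat \<Rightarrow> nat \<Rightarrow> nat \<Rightarrow> complex mat \<Rightarrow> complex mat" where
  "ampl E n m k X = mat (k*m) (k*m) (\<lambda>(r,c).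
      E (mat n n (\<lambda>(u,v). X $$ ((r div m)*n + u, (c div m)*n + v))) $$ (r mod m, c mod m))"

definition completely_positive :: "nat \<Rightarrow> nat \<Rightarrow> (complex mat \<Rightarrow> complex mat) \<Rightarrow> bool" where
  "completely_positive n m E \<longleftrightarrow>
     (\<forall>k X. psd (k*n) X \<longrightarrow> psd (k*m) (ampl E n m k X))"

definition trace_preserving :: "nat \<Rightarrow> (complex mat \<Rightarrow> complex mat) \<Rightarrow> bool" where
  "trace_preserving n E \<longleftrightarrow> (\<forall>X \<in> carrier_mat n n. tr (E X) = tr X)"

definition quantum_channel :: "nat \<Rightarrow> nat \<Rightarrow> (complex mat \<Rightarrow> complex mat) \<Rightarrow> bool" where
  "quantum_channel n m E \<longleftrightarrow> lin_map n m E \<and> completely_positive n m E \<and> trace_preserving n E"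

definition is_adjoint :: "nat \<Rightarrow> nat \<Rightarrow> (complex mat \<Rightarrow> complex mat) \<Rightarrow> (complex mat \<Rightarrow> complex mat) \<Rightarrow> bool" where
  "is_adjoint n m E Ed \<longleftrightarrow>
     (\<forall>X \<in> carrier_mat m m. Ed X \<in> carrier_mat n n) \<and>
     (\<forall>X \<in> carrier_mat m m. \<forall>Y \<in> carrier_mat n n. tr (X * E Y) = tr (Ed X * Y))"

end

theory Submission
  imports Defs
begin

text \<open>
  Suppose a joint distribution p exists. Take i \<noteq> j and unit vectors u, w in the ranges of the
  projectors Pi_i, Pi_j, and consider the states
  rho(a, c) = a|u><u| + (1 - a)|w><w| + c|u><w| + cnj c |w><u| with |c|^2 \<le> a (1 - a).
  The map (a, c) \<mapsto> p_if(rho(a, c)) is convex-linear and nonnegative on this disk and, by the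
  first marginal, vanishes at (0, 0). Because the disk is tangent to the line a = 0 there, such a
  map cannot depend on c; likewise for p_jf, while p_kf vanishes for the other k. By the second
  marginal, Tr(E^dagger(Xi_f) rho(1/2, c)) is therefore independent of c, which forces
  <w|E^dagger(Xi_f)|u> = 0. Hence Pi_j E^dagger(Xi_f) Pi_i = 0 whenever i \<noteq> j, so
  E^dagger(Xi_f) commutes with every Pi_i.
\<close>

section \<open>Sesquilinear forms and resolutions of the identity\<close>

definition cinner :: "nat \<Rightarrow> complex vec \<Rightarrow> complex vec \<Rightarrow> complex" where
  "cinner n x y = (\<Sum>r<n. x$r * cnj (y$r))"

definition sesq :: "nat \<Rightarrow> complex mat \<Rightarrow> complex vec \<Rightarrow> complex vec \<Rightarrow> complex" where
  "sesq n M x y = (\<Sum>r<n. \<Sum>s<n. cnj (x$r) * M$$(r,s) * y$s)"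

lemma cinner_commute: "cinner n y x = cnj (cinner n x y)"
  by (simp add: cinner_def cnj_sum mult.commute)

lemma cinner_smult:
  assumes "x \<in> carrier_vec n" "y \<in> carrier_vec n"
  shows "cinner n (of_real k \<cdot>\<^sub>v x) (of_real l \<cdot>\<^sub>v y) = of_real (k * l) * cinner n x y"
  using assms by (simp add: cinner_def sum_distrib_left algebra_simps)

lemma sesq_smult:
  assumes "x \<in> carrier_vec n" "y \<in> carrier_vec n"
  shows "sesq n M (of_real k \<cdot>\<^sub>v x) (of_real l \<cdot>\<^sub>v y) = of_real (k * l) * sesq n M x y"
  using assms by (simp add: sesq_def sum_distrib_left algebra_simps)

lemma sesq_eq_sum_mult_mat_vec:
  assumes "M \<in> carrier_mat n n" "y \<in> carrier_vec n"
  shows "sesq n M x y = (\<Sum>r<n. cnj (x$r) * (M *\<^sub>v y)$r)"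
  using assms by (simp add: sesq_def scalar_prod_def lessThan_atLeast0 sum_distrib_left algebra_simps)

lemma sesq_eq_0_if_mult_mat_vec_eq_0:
  assumes "M \<in> carrier_mat n n" "y \<in> carrier_vec n" "M *\<^sub>v y = 0\<^sub>v n"
  shows "sesq n M x y = 0"
  using assms by (simp add: sesq_eq_sum_mult_mat_vec)

lemma exists_unit_rescaling:
  assumes y: "y \<in> carrier_vec n" and nz: "y \<noteq> 0\<^sub>v n"
  shows "\<exists>k::real. k \<noteq> 0 \<and> cinner n (of_real k \<cdot>\<^sub>v y) (of_real k \<cdot>\<^sub>v y) = 1"
proof -
  define S where "S = (\<Sum>r<n. (cmod (y$r))^2)"
  have "cinner n y y = (\<Sum>r<n. of_real ((cmod (y$r))^2))"
    unfolding cinner_def by (intro sum.cong refl) (rule complex_norm_square[symmetric])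
  then have yy: "cinner n y y = of_real S" by (simp add: S_def)
  obtain r0 where r0: "r0 < n" "y$r0 \<noteq> 0" using y nz by (metis eq_vecI carrier_vecD index_zero_vec(1,2))
  have "0 < (cmod (y$r0))^2" using r0 by simp
  also have "\<dots> \<le> S" unfolding S_def using r0 by (intro member_le_sum) auto
  finally have S: "0 < S" .
  define k where "k = 1 / sqrt S"
  have "cinner n (of_real k \<cdot>\<^sub>v y) (of_real k \<cdot>\<^sub>v y) = of_real (k * k * S)"
    using y by (simp add: cinner_smult yy)
  moreover have "k * k * S = 1" using S by (simp add: k_def)
  moreover have "k \<noteq> 0" using S by (simp add: k_def)
  ultimately show ?thesis by auto
qed

lemma hermitian_entry:
  assumes "hermitian n P" "r < n" "s < n"
  shows "P $$ (r,s) = cnj (P $$ (s,r))"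
  using assms by (metis adj_def carrier_matD hermitian_def index_mat(1) old.prod.case)

lemma hermitian_row:
  assumes H: "hermitian n P" and r: "r < n"
  shows "row P r = conjugate (col P r)"
proof -
  have c: "P \<in> carrier_mat n n" using H by (simp add: hermitian_def)
  show ?thesis
    by (rule eq_vecI) (use c r hermitian_entry[OF H r] in auto)
qed

lemma hermitian_cinner:
  assumes H: "hermitian n P" and y: "y \<in> carrier_vec n" and z: "z \<in> carrier_vec n"
  shows "cinner n (P *\<^sub>v y) z = cinner n y (P *\<^sub>v z)"
proof -
  have c: "P \<in> carrier_mat n n" using H by (simp add: hermitian_def)
  have "cinner n (P *\<^sub>v y) z = (\<Sum>r<n. \<Sum>s<n. P$$(r,s) * y$s * cnj (z$r))"
    using c y by (simp add: cinner_def scalar_prod_def lessThan_atLeast0 sum_distrib_right)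
  also have "\<dots> = (\<Sum>s<n. \<Sum>r<n. y$s * cnj (P$$(s,r) * z$r))"
  proof (subst sum.swap, intro sum.cong refl)
    fix s r assume "s \<in> {..<n}" "r \<in> {..<n}"
    then have "P$$(r,s) = cnj (P$$(s,r))" by (intro hermitian_entry[OF H]) auto
    then show "P$$(r,s) * y$s * cnj (z$r) = y$s * cnj (P$$(s,r) * z$r)" by simp
  qed
  also have "\<dots> = cinner n y (P *\<^sub>v z)"
    using c z by (simp add: cinner_def scalar_prod_def lessThan_atLeast0 sum_distrib_left cnj_sum)
  finally show ?thesis .
qed

lemma hermitian_sandwich_entry:
  assumes Hb: "hermitian n Pb" and Ha: "hermitian n Pa" and Q: "Q \<in> carrier_mat n n"
    and r: "r < n" and s: "s < n"
  shows "(Pb * Q * Pa) $$ (r,s) = sesq n Q (col Pb r) (col Pa s)"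
proof -
  have cb: "Pb \<in> carrier_mat n n" and ca: "Pa \<in> carrier_mat n n"
    using Hb Ha by (auto simp: hermitian_def)
  have "(Pb * Q * Pa) $$ (r,s) = row Pb r \<bullet> col (Q * Pa) s" using cb ca Q r s by simp
  also have "\<dots> = conjugate (col Pb r) \<bullet> (Q *\<^sub>v col Pa s)"
    using hermitian_row[OF Hb r] col_mult2[OF Q ca s] by simp
  also have "\<dots> = sesq n Q (col Pb r) (col Pa s)"
    using cb ca Q s r by (simp add: sesq_eq_sum_mult_mat_vec scalar_prod_def lessThan_atLeast0)
  finally show ?thesis .
qed

lemma mult_msum_right:
  assumes M: "M \<in> carrier_mat n n" and P: "\<And>k. k \<in> I \<Longrightarrow> P k \<in> carrier_mat n n"
  shows "M * msum n P I = msum n (\<lambda>k. M * P k) I"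
proof (rule eq_matI)
  fix r s assume "r < dim_row (msum n (\<lambda>k. M * P k) I)" "s < dim_col (msum n (\<lambda>k. M * P k) I)"
  then have r: "r < n" and s: "s < n" by (auto simp: msum_def)
  have "(M * msum n P I) $$ (r,s) = (\<Sum>k\<in>I. \<Sum>t<n. M$$(r,t) * P k $$ (t,s))"
    using M r s by (simp add: msum_def scalar_prod_def lessThan_atLeast0 sum_distrib_left sum.swap[of _ I])
  also have "\<dots> = (\<Sum>k\<in>I. (M * P k) $$ (r,s))"
  proof (rule sum.cong[OF refl])
    fix k assume "k \<in> I"
    then have "P k \<in> carrier_mat n n" by (rule P)
    then show "(\<Sum>t<n. M$$(r,t) * P k $$ (t,s)) = (M * P k) $$ (r,s)"
      using M r s by (simp add: scalar_prod_def lessThan_atLeast0)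
  qed
  also have "\<dots> = msum n (\<lambda>k. M * P k) I $$ (r,s)" using r s by (simp add: msum_def)
  finally show "(M * msum n P I) $$ (r,s) = msum n (\<lambda>k. M * P k) I $$ (r,s)" .
qed (use M in \<open>auto simp: msum_def\<close>)

lemma mult_msum_left:
  assumes M: "M \<in> carrier_mat n n" and P: "\<And>k. k \<in> I \<Longrightarrow> P k \<in> carrier_mat n n"
  shows "msum n P I * M = msum n (\<lambda>k. P k * M) I"
proof (rule eq_matI)
  fix r s assume "r < dim_row (msum n (\<lambda>k. P k * M) I)" "s < dim_col (msum n (\<lambda>k. P k * M) I)"
  then have r: "r < n" and s: "s < n" by (auto simp: msum_def)
  have "(msum n P I * M) $$ (r,s) = (\<Sum>k\<in>I. \<Sum>t<n. P k $$ (r,t) * M$$(t,s))"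
    using M r s by (simp add: msum_def scalar_prod_def lessThan_atLeast0 sum_distrib_right sum.swap[of _ I])
  also have "\<dots> = (\<Sum>k\<in>I. (P k * M) $$ (r,s))"
  proof (rule sum.cong[OF refl])
    fix k assume "k \<in> I"
    then have "P k \<in> carrier_mat n n" by (rule P)
    then show "(\<Sum>t<n. P k $$ (r,t) * M$$(t,s)) = (P k * M) $$ (r,s)"
      using M r s by (simp add: scalar_prod_def lessThan_atLeast0)
  qed
  also have "\<dots> = msum n (\<lambda>k. P k * M) I $$ (r,s)" using r s by (simp add: msum_def)
  finally show "(msum n P I * M) $$ (r,s) = msum n (\<lambda>k. P k * M) I $$ (r,s)" .
qed (use M in \<open>auto simp: msum_def\<close>)

lemma msum_eq_single:
  assumes fin: "finite I" and i: "i \<in> I" and fi: "f i \<in> carrier_mat n n"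
    and zero: "\<And>k. k \<in> I \<Longrightarrow> k \<noteq> i \<Longrightarrow> f k = 0\<^sub>m n n"
  shows "msum n f I = f i"
proof (rule eq_matI)
  fix r s assume "r < dim_row (f i)" "s < dim_col (f i)"
  then have r: "r < n" and s: "s < n" using fi by auto
  have "msum n f I $$ (r,s) = f i $$ (r,s) + (\<Sum>k\<in>I-{i}. f k $$ (r,s))"
    using fin i r s by (simp add: msum_def sum.remove)
  also have "(\<Sum>k\<in>I-{i}. f k $$ (r,s)) = 0" using zero r s by (intro sum.neutral) auto
  finally show "msum n f I $$ (r,s) = f i $$ (r,s)" by simp
qed (use fi in \<open>auto simp: msum_def\<close>)

lemma msum_lessThan_2:
  fixes f :: "nat \<Rightarrow> complex mat"
  assumes "f 0 \<in> carrier_mat n n" "f 1 \<in> carrier_mat n n"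
  shows "msum n f {..<2} = f 0 + f 1"
  by (rule eq_matI) (use assms in \<open>auto simp: msum_def numeral_2_eq_2\<close>)

lemma commute_if_off_diagonal_blocks_zero:
  assumes fin: "finite I" and i: "i \<in> I"
    and P: "\<And>k. k \<in> I \<Longrightarrow> P k \<in> carrier_mat n n" and resolution: "msum n P I = 1\<^sub>m n"
    and M: "M \<in> carrier_mat n n"
    and off: "\<And>j k. j \<in> I \<Longrightarrow> k \<in> I \<Longrightarrow> j \<noteq> k \<Longrightarrow> P j * M * P k = 0\<^sub>m n n"
  shows "P i * M = M * P i"
proof -
  have Pi: "P i \<in> carrier_mat n n" using P i .
  have PiM: "P i * M \<in> carrier_mat n n" and MPi: "M * P i \<in> carrier_mat n n"
    using Pi M by auto
  have "P i * M = P i * M * msum n P I"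
    unfolding resolution using PiM by (rule right_mult_one_mat[symmetric])
  also have "\<dots> = msum n (\<lambda>k. P i * M * P k) I" using PiM P by (rule mult_msum_right)
  also have "\<dots> = P i * M * P i"
    using PiM Pi by (intro msum_eq_single[OF fin i] off[OF i]) auto
  also have "\<dots> = P i * (M * P i)" by (rule assoc_mult_mat[OF Pi M Pi])
  also have "\<dots> = msum n (\<lambda>k. P k * (M * P i)) I"
  proof (rule msum_eq_single[symmetric, OF fin i])
    fix k assume k: "k \<in> I" "k \<noteq> i"
    have "P k * (M * P i) = P k * M * P i" by (rule assoc_mult_mat[OF P[OF k(1)] M Pi, symmetric])
    then show "P k * (M * P i) = 0\<^sub>m n n" using off[OF k(1) i k(2)] by simp
  qed (use Pi MPi in auto)
  also have "\<dots> = msum n P I * (M * P i)" using MPi P by (rule mult_msum_left[symmetric])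
  also have "\<dots> = M * P i" unfolding resolution using MPi by (rule left_mult_one_mat)
  finally show ?thesis .
qed

section \<open>Convex-linear functions on the qubit disk\<close>

text \<open>(a, c) lies in the disk iff [[a, c], [cnj c, 1 - a]] is a density matrix.\<close>

definition qubit_disk :: "real \<Rightarrow> complex \<Rightarrow> bool" where
  "qubit_disk a c \<longleftrightarrow> 0 \<le> a \<and> a \<le> 1 \<and> (cmod c)^2 \<le> a * (1 - a)"

lemma qubit_disk_uminus [simp]: "qubit_disk a (- c) = qubit_disk a c"
  by (simp add: qubit_disk_def)

lemma qubit_disk_cnj [simp]: "qubit_disk a (cnj c) = qubit_disk a c"
  by (simp add: qubit_disk_def)

lemma qubit_disk_0 [simp]: "qubit_disk a 0 \<longleftrightarrow> 0 \<le> a \<and> a \<le> 1"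
  by (auto simp: qubit_disk_def)

lemma mult_le_weighted_squares:
  fixes a k x y :: real
  assumes "0 \<le> a" "a \<le> 1" "k^2 \<le> a * (1 - a)" "0 \<le> k" "0 \<le> x" "0 \<le> y"
  shows "2 * k * x * y \<le> a * x^2 + (1 - a) * y^2"
proof -
  have k: "k \<le> sqrt a * sqrt (1 - a)"
    using assms by (simp add: real_le_rsqrt real_sqrt_mult[symmetric])
  have "2 * k * x * y \<le> 2 * (sqrt a * sqrt (1 - a)) * x * y"
    using k assms by (intro mult_right_mono) auto
  also have "\<dots> \<le> a * x^2 + (1 - a) * y^2"
  proof -
    have "0 \<le> (sqrt a * x - sqrt (1 - a) * y)^2" by simp
    also have "\<dots> = (sqrt a)^2 * x^2 + (sqrt (1 - a))^2 * y^2 - 2 * (sqrt a * sqrt (1 - a)) * x * y"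
      by (simp add: power2_eq_square algebra_simps)
    also have "\<dots> = a * x^2 + (1 - a) * y^2 - 2 * (sqrt a * sqrt (1 - a)) * x * y"
      using assms by simp
    finally show ?thesis by simp
  qed
  finally show ?thesis .
qed

lemma qubit_form_nonneg:
  assumes "qubit_disk a c"
  shows "0 \<le> Re (of_real a * (\<alpha> * cnj \<alpha>) + of_real (1 - a) * (\<beta> * cnj \<beta>)
                 + c * (\<alpha> * cnj \<beta>) + cnj c * (\<beta> * cnj \<alpha>))"
proof -
  define z where "z = c * (\<alpha> * cnj \<beta>)"
  have "\<alpha> * cnj \<alpha> = of_real ((cmod \<alpha>)^2)" "\<beta> * cnj \<beta> = of_real ((cmod \<beta>)^2)"
    using complex_norm_square[of \<alpha>] complex_norm_square[of \<beta>] by simp_all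
  then have "of_real a * (\<alpha> * cnj \<alpha>) + of_real (1 - a) * (\<beta> * cnj \<beta>)
                 + c * (\<alpha> * cnj \<beta>) + cnj c * (\<beta> * cnj \<alpha>)
      = of_real (a * (cmod \<alpha>)^2 + (1 - a) * (cmod \<beta>)^2) + (z + cnj z)"
    by (simp only: z_def of_real_add of_real_mult) (simp add: algebra_simps)
  then have "Re (of_real a * (\<alpha> * cnj \<alpha>) + of_real (1 - a) * (\<beta> * cnj \<beta>)
                 + c * (\<alpha> * cnj \<beta>) + cnj c * (\<beta> * cnj \<alpha>))
      = a * (cmod \<alpha>)^2 + (1 - a) * (cmod \<beta>)^2 + 2 * Re z"
    by simp
  moreover have "- Re z \<le> cmod c * cmod \<alpha> * cmod \<beta>"
    using abs_Re_le_cmod[of z] by (simp add: z_def norm_mult)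
  moreover have "2 * cmod c * cmod \<alpha> * cmod \<beta> \<le> a * (cmod \<alpha>)^2 + (1 - a) * (cmod \<beta>)^2"
    using assms by (intro mult_le_weighted_squares) (auto simp: qubit_disk_def)
  ultimately show ?thesis by linarith
qed

lemma eq_0_if_square_le_linear:
  fixes x K :: real
  assumes "\<And>t. 0 < t \<Longrightarrow> t \<le> 1/2 \<Longrightarrow> x^2 \<le> K * t"
  shows "x = 0"
proof (rule ccontr)
  assume "x \<noteq> 0"
  then have x2: "0 < x^2" by simp
  define C where "C = \<bar>K\<bar> + 1"
  have C: "0 < C" by (simp add: C_def add_nonneg_pos)
  define t where "t = min (1/2) (x^2 / (2 * C))"
  have "0 < t" using x2 C by (simp add: t_def)
  moreover have "t \<le> 1/2" unfolding t_def by (rule min.cobounded1)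
  ultimately have t: "0 < t" "t \<le> 1/2" .
  have "x^2 \<le> K * t" by (rule assms[OF t])
  also have "\<dots> \<le> C * (x^2 / (2 * C))"
  proof (rule mult_mono)
    show "K \<le> C" by (simp add: C_def)
    show "t \<le> x^2 / (2 * C)" unfolding t_def by (rule min.cobounded2)
  qed (use t C in auto)
  also have "\<dots> = x^2 / 2" using C by (simp add: divide_simps)
  also have "\<dots> < x^2" using x2 by simp
  finally show False by simp
qed

locale qubit_disk_convex_linear =
  fixes G :: "real \<Rightarrow> complex \<Rightarrow> real"
  assumes nonneg: "qubit_disk a c \<Longrightarrow> 0 \<le> G a c"
    and convex_linear: "qubit_disk a1 c1 \<Longrightarrow> qubit_disk a2 c2 \<Longrightarrow> 0 \<le> l \<Longrightarrow> l \<le> 1 \<Longrightarrow>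
      G (l * a1 + (1 - l) * a2) (of_real l * c1 + of_real (1 - l) * c2) = l * G a1 c1 + (1 - l) * G a2 c2"
    and vanishes_at_0: "G 0 0 = 0"
begin

definition odd_part :: "real \<Rightarrow> complex \<Rightarrow> real" where
  "odd_part a c = G a c - G a (- c)"

lemma scale: "qubit_disk a c \<Longrightarrow> 0 \<le> t \<Longrightarrow> t \<le> 1 \<Longrightarrow> G (t * a) (of_real t * c) = t * G a c"
  using convex_linear[of a c 0 0 t] by (simp add: vanishes_at_0)

lemma real_axis: "0 \<le> a \<Longrightarrow> a \<le> 1 \<Longrightarrow> G a 0 = a * G 1 0"
  using scale[of 1 0 a] by simp

lemma add_uminus:
  assumes "qubit_disk a c"
  shows "G a c + G a (- c) = 2 * a * G 1 0"
proof -
  have "G a 0 = 1/2 * G a c + 1/2 * G a (- c)"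
    using convex_linear[of a c a "- c" "1/2"] assms by simp
  moreover have "G a 0 = a * G 1 0" using assms by (intro real_axis) (auto simp: qubit_disk_def)
  ultimately show ?thesis by simp
qed

lemma abs_odd_part_le: "qubit_disk a c \<Longrightarrow> \<bar>odd_part a c\<bar> \<le> 2 * a * G 1 0"
  using add_uminus[of a c] nonneg[of a c] nonneg[of a "- c"] by (auto simp: odd_part_def)

lemma odd_part_scale:
  "qubit_disk a c \<Longrightarrow> 0 \<le> t \<Longrightarrow> t \<le> 1 \<Longrightarrow> odd_part (t * a) (of_real t * c) = t * odd_part a c"
  using scale[of a c t] scale[of a "- c" t] by (simp add: odd_part_def algebra_simps)

lemma odd_part_chord:
  assumes c: "qubit_disk a c" and "0 \<le> r" "r \<le> 1"
  shows "odd_part a (of_real r * c) = r * odd_part a c"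
proof -
  define l where "l = (1 + r) / 2"
  have l: "0 \<le> l" "l \<le> 1" using assms by (auto simp: l_def)
  have lr: "2 * l - 1 = r" by (simp add: l_def field_simps)
  have pos: "of_real l * c + of_real (1 - l) * (- c) = of_real r * c"
    and neg: "of_real l * (- c) + of_real (1 - l) * c = - (of_real r * c)"
    unfolding lr[symmetric] by (simp_all add: algebra_simps)
  have aa: "l * a + (1 - l) * a = a" by (simp add: algebra_simps)
  have "G a (of_real r * c) = l * G a c + (1 - l) * G a (- c)"
    using convex_linear[of a c a "- c" l] c l by (simp only: aa pos qubit_disk_uminus simp_thms)
  moreover have "G a (- (of_real r * c)) = l * G a (- c) + (1 - l) * G a c"
    using convex_linear[of a "- c" a c l] c l by (simp only: aa neg qubit_disk_uminus simp_thms)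
  ultimately have "odd_part a (of_real r * c) = (2 * l - 1) * odd_part a c"
    by (simp add: odd_part_def algebra_simps)
  then show ?thesis by (simp only: lr)
qed

text \<open>
  Shrink (a, c) towards the origin by t, then move horizontally to the boundary of the disk.
  On that chord the odd part is linear and bounded by 2 a' G 1 0 at the endpoints, while the
  half-length of the chord is about sqrt a', much larger than a' for small t.
\<close>

lemma odd_part_square_le:
  assumes ac: "qubit_disk a c" and t: "0 < t" "t \<le> 1/2"
  shows "(odd_part a c)^2 \<le> 8 * (G 1 0)^2 * t"
proof (cases "c = 0")
  case True
  then show ?thesis using t by (simp add: odd_part_def)
next
  case False
  define D where "D = odd_part a c"
  define a' where "a' = t * a"
  define s where "s = sqrt (a' * (1 - a')) / cmod c"
  have c: "0 < (cmod c)^2" using False by simp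
  have cle: "(cmod c)^2 \<le> a * (1 - a)" and a01: "0 \<le> a" "a \<le> 1"
    using ac by (auto simp: qubit_disk_def)
  then have "0 < a * (1 - a)" using c by linarith
  then have a: "0 < a" "a < 1" using a01 by (auto simp: zero_less_mult_iff)
  have a': "0 < a'" "a' \<le> t" using a t by (auto simp: a'_def mult_left_le)
  have s2: "s^2 * (cmod c)^2 = a' * (1 - a')"
    using a' t False by (simp add: s_def power_divide)
  have spos: "0 < s" using a' t False by (simp add: s_def)
  have "t^2 * (cmod c)^2 \<le> t^2 * (a * (1 - a))" using cle by (simp add: mult_left_mono)
  also have "\<dots> \<le> a' * (1 - a')"
    using t a by (simp add: a'_def power2_eq_square algebra_simps mult_left_le)
  finally have "t^2 * (cmod c)^2 \<le> s^2 * (cmod c)^2" by (simp only: s2)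
  then have "t^2 \<le> s^2" using c by simp
  then have ts: "t \<le> s" by (rule power2_le_imp_le) (use spos in simp)
  have disk: "qubit_disk a' (of_real s * c)"
    using s2 a' t by (simp add: qubit_disk_def norm_mult power_mult_distrib)
  have "t * D = odd_part a' (of_real t * c)"
    using odd_part_scale[OF ac] t by (simp add: D_def a'_def)
  also have "of_real t * c = of_real (t / s) * (of_real s * c)" using spos by simp
  also have "odd_part a' \<dots> = t / s * odd_part a' (of_real s * c)"
    using ts spos t by (intro odd_part_chord[OF disk]) auto
  finally have "D * s = odd_part a' (of_real s * c)" using t spos by (simp add: field_simps)
  then have "\<bar>D\<bar> * s \<le> 2 * a' * G 1 0" using abs_odd_part_le[OF disk] spos by (simp add: abs_mult)
  then have "(\<bar>D\<bar> * s)^2 \<le> (2 * a' * G 1 0)^2" by (rule power_mono) (use spos in simp)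
  then have "D^2 * s^2 \<le> 4 * a'^2 * (G 1 0)^2" by (simp add: power_mult_distrib)
  then have "D^2 * s^2 * (cmod c)^2 \<le> 4 * a'^2 * (G 1 0)^2 * (cmod c)^2"
    by (rule mult_right_mono) simp
  then have "a' * (D^2 * (1 - a')) \<le> a' * (4 * (G 1 0)^2 * (a' * (cmod c)^2))"
    by (simp only: mult.assoc s2) (simp add: power2_eq_square mult_ac)
  then have "D^2 * (1 - a') \<le> 4 * (G 1 0)^2 * (a' * (cmod c)^2)"
    by (rule mult_left_le_imp_le) (use a' in simp)
  also have "\<dots> \<le> 4 * (G 1 0)^2 * t"
  proof (rule mult_left_mono)
    have "a * (1 - a) \<le> 1" using a by (intro mult_le_one) auto
    then have "a' * (cmod c)^2 \<le> t * 1" using a' cle by (intro mult_mono) auto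
    then show "a' * (cmod c)^2 \<le> t" by simp
  qed simp
  finally have "D^2 * (1 - a') \<le> 4 * (G 1 0)^2 * t" .
  moreover have "D^2 * (1/2) \<le> D^2 * (1 - a')" using a' t by (intro mult_left_mono) auto
  ultimately show ?thesis unfolding D_def by linarith
qed

lemma odd_part_eq_0: "qubit_disk a c \<Longrightarrow> odd_part a c = 0"
  by (rule eq_0_if_square_le_linear, rule odd_part_square_le)

theorem eq_diagonal_multiple:
  assumes "qubit_disk a c"
  shows "G a c = a * G 1 0"
  using add_uminus[OF assms] odd_part_eq_0[OF assms] by (simp add: odd_part_def)

end

section \<open>Two-level states\<close>

lemma density_carrier: "density n \<rho> \<Longrightarrow> \<rho> \<in> carrier_mat n n"
  by (simp add: density_def psd_def hermitian_def)

definition orthonormal_pair :: "nat \<Rightarrow> complex vec \<Rightarrow> complex vec \<Rightarrow> bool" where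
  "orthonormal_pair n u w \<longleftrightarrow> u \<in> carrier_vec n \<and> w \<in> carrier_vec n \<and>
     cinner n u u = 1 \<and> cinner n w w = 1 \<and> cinner n u w = 0"

lemma orthonormal_pair_commute: "orthonormal_pair n u w \<Longrightarrow> orthonormal_pair n w u"
  using cinner_commute[of n w u] by (auto simp: orthonormal_pair_def)

definition two_level_state :: "nat \<Rightarrow> complex vec \<Rightarrow> complex vec \<Rightarrow> real \<Rightarrow> complex \<Rightarrow> complex mat" where
  "two_level_state n u w a c = mat n n (\<lambda>(r,s).
     of_real a * (u$r * cnj (u$s)) + of_real (1 - a) * (w$r * cnj (w$s))
     + c * (u$r * cnj (w$s)) + cnj c * (w$r * cnj (u$s)))"

lemma two_level_state_carrier [simp]: "two_level_state n u w a c \<in> carrier_mat n n"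
  and two_level_state_dim [simp]:
    "dim_row (two_level_state n u w a c) = n" "dim_col (two_level_state n u w a c) = n"
  by (simp_all add: two_level_state_def)

lemma two_level_state_swap: "two_level_state n w u (1 - a) (cnj c) = two_level_state n u w a c"
  by (rule eq_matI) (auto simp: two_level_state_def algebra_simps)

lemma two_level_state_convex_combination:
  "of_real l \<cdot>\<^sub>m two_level_state n u w a1 c1 + of_real (1 - l) \<cdot>\<^sub>m two_level_state n u w a2 c2
     = two_level_state n u w (l * a1 + (1 - l) * a2) (of_real l * c1 + of_real (1 - l) * c2)"
  by (rule eq_matI) (auto simp: two_level_state_def algebra_simps)

lemma tr_mult_two_level_state:
  assumes M: "M \<in> carrier_mat n n"
  shows "tr (M * two_level_state n u w a c) = of_real a * sesq n M u u + of_real (1 - a) * sesq n M w w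
     + c * sesq n M w u + cnj c * sesq n M u w"
proof -
  have "tr (M * two_level_state n u w a c) = (\<Sum>r<n. \<Sum>s<n. M$$(r,s) * two_level_state n u w a c $$ (s,r))"
    using M unfolding tr_def by (auto simp: scalar_prod_def lessThan_atLeast0 intro!: sum.cong)
  then show ?thesis
    by (simp add: two_level_state_def sesq_def sum.distrib sum_subtractf sum_distrib_left algebra_simps)
qed

lemma sesq_two_level_state:
  "sesq n (two_level_state n u w a c) v v =
     of_real a * (cinner n u v * cnj (cinner n u v)) + of_real (1 - a) * (cinner n w v * cnj (cinner n w v))
     + c * (cinner n u v * cnj (cinner n w v)) + cnj c * (cinner n w v * cnj (cinner n u v))"
proof -
  have prod: "cinner n x v * cnj (cinner n y v) = (\<Sum>r<n. \<Sum>s<n. cnj (v$r) * (x$r * cnj (y$s)) * v$s)"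
    for x y
    unfolding cinner_def by (simp only: cnj_sum sum_product) (simp add: algebra_simps)
  show ?thesis
    unfolding prod
    by (simp add: two_level_state_def sesq_def sum.distrib sum_subtractf sum_distrib_left algebra_simps)
qed

lemma density_two_level_state:
  assumes uw: "orthonormal_pair n u w" and ac: "qubit_disk a c"
  shows "density n (two_level_state n u w a c)"
proof -
  have "adj (two_level_state n u w a c) = two_level_state n u w a c"
    by (rule eq_matI) (auto simp: adj_def two_level_state_def algebra_simps)
  then have herm: "hermitian n (two_level_state n u w a c)" by (simp add: hermitian_def)
  have "0 \<le> Re (conjugate v \<bullet> (two_level_state n u w a c *\<^sub>v v))" if v: "v \<in> carrier_vec n" for v
  proof -
    have "conjugate v \<bullet> (two_level_state n u w a c *\<^sub>v v) = sesq n (two_level_state n u w a c) v v"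
      using v by (simp add: sesq_eq_sum_mult_mat_vec scalar_prod_def lessThan_atLeast0)
    then show ?thesis unfolding sesq_two_level_state using qubit_form_nonneg[OF ac] by simp
  qed
  moreover have "tr (two_level_state n u w a c) = 1"
  proof -
    have "tr (two_level_state n u w a c) = of_real a * cinner n u u + of_real (1 - a) * cinner n w w
       + c * cinner n u w + cnj c * cinner n w u"
      by (simp add: tr_def two_level_state_def cinner_def sum.distrib sum_distrib_left)
    also have "\<dots> = 1" using uw cinner_commute[of n w u] by (simp add: orthonormal_pair_def)
    finally show ?thesis .
  qed
  ultimately show ?thesis using herm by (simp add: density_def psd_def)
qed

section \<open>Joint distributions force commutation\<close>

text \<open>
  Q f stands for the effect E^dagger(Xi_f): by the adjoint relation the second marginal of the
  theorem is Tr(E^dagger(Xi_f) rho), which is all that is used of the channel.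
\<close>

locale joint_distribution =
  fixes n :: nat and I :: "'i set" and F :: "'f set"
    and P :: "'i \<Rightarrow> complex mat" and Q :: "'f \<Rightarrow> complex mat"
    and p :: "'i \<Rightarrow> 'f \<Rightarrow> complex mat \<Rightarrow> real"
  assumes finite_I: "finite I" and finite_F: "finite F"
    and projector: "i \<in> I \<Longrightarrow> projector n (P i)"
    and orthogonal: "i \<in> I \<Longrightarrow> j \<in> I \<Longrightarrow> i \<noteq> j \<Longrightarrow> P i * P j = 0\<^sub>m n n"
    and resolution: "msum n P I = 1\<^sub>m n"
    and Q_carrier: "f \<in> F \<Longrightarrow> Q f \<in> carrier_mat n n"
    and nonneg: "density n \<rho> \<Longrightarrow> i \<in> I \<Longrightarrow> f \<in> F \<Longrightarrow> 0 \<le> p i f \<rho>"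
    and marginal_P: "density n \<rho> \<Longrightarrow> i \<in> I \<Longrightarrow> of_real (\<Sum>f\<in>F. p i f \<rho>) = tr (P i * \<rho>)"
    and marginal_Q: "density n \<rho> \<Longrightarrow> f \<in> F \<Longrightarrow> of_real (\<Sum>i\<in>I. p i f \<rho>) = tr (Q f * \<rho>)"
    and convex_linear: "density n \<rho>1 \<Longrightarrow> density n \<rho>2 \<Longrightarrow> 0 \<le> l \<Longrightarrow> l \<le> 1 \<Longrightarrow> i \<in> I \<Longrightarrow> f \<in> F \<Longrightarrow>
      p i f (of_real l \<cdot>\<^sub>m \<rho>1 + of_real (1 - l) \<cdot>\<^sub>m \<rho>2) = l * p i f \<rho>1 + (1 - l) * p i f \<rho>2"
begin

lemma P_hermitian: "i \<in> I \<Longrightarrow> hermitian n (P i)"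
  using projector by (simp add: projector_def)

lemma P_carrier: "i \<in> I \<Longrightarrow> P i \<in> carrier_mat n n"
  using P_hermitian by (simp add: hermitian_def)

lemma P_idem: "i \<in> I \<Longrightarrow> P i * P i = P i"
  using projector by (simp add: projector_def)

lemma P_mult_vec_eq_0:
  assumes "i \<in> I" "k \<in> I" "k \<noteq> i" "u \<in> carrier_vec n" "P i *\<^sub>v u = u"
  shows "P k *\<^sub>v u = 0\<^sub>v n"
proof -
  have "P k *\<^sub>v u = (P k * P i) *\<^sub>v u"
    using assms P_carrier by (metis assoc_mult_mat_vec)
  also have "\<dots> = 0\<^sub>v n" using assms orthogonal by (intro eq_vecI) auto
  finally show ?thesis .
qed

lemma p_eq_0_if_tr_eq_0:
  assumes \<rho>: "density n \<rho>" and i: "i \<in> I" and f: "f \<in> F" and tr0: "tr (P i * \<rho>) = 0"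
  shows "p i f \<rho> = 0"
proof -
  have "(\<Sum>g\<in>F. p i g \<rho>) = 0" using marginal_P[OF \<rho> i] tr0 by (metis of_real_eq_0_iff)
  moreover have "\<forall>g\<in>F. 0 \<le> p i g \<rho>" using nonneg[OF \<rho> i] by blast
  ultimately show ?thesis using f by (simp add: sum_nonneg_eq_0_iff[OF finite_F])
qed

lemma p_two_level_state:
  assumes i: "i \<in> I" and f: "f \<in> F" and uw: "orthonormal_pair n u w"
    and w: "P i *\<^sub>v w = 0\<^sub>v n" and ac: "qubit_disk a c"
  shows "p i f (two_level_state n u w a c) = a * p i f (two_level_state n u w 1 0)"
proof -
  interpret G: qubit_disk_convex_linear "\<lambda>a c. p i f (two_level_state n u w a c)"
  proof
    show "0 \<le> p i f (two_level_state n u w a c)" if "qubit_disk a c" for a c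
      using nonneg[OF density_two_level_state[OF uw that] i f] .
    show "p i f (two_level_state n u w (l * a1 + (1 - l) * a2) (of_real l * c1 + of_real (1 - l) * c2))
        = l * p i f (two_level_state n u w a1 c1) + (1 - l) * p i f (two_level_state n u w a2 c2)"
      if "qubit_disk a1 c1" "qubit_disk a2 c2" "0 \<le> l" "l \<le> 1" for a1 c1 a2 c2 l
      using convex_linear[OF density_two_level_state[OF uw that(1)] density_two_level_state[OF uw that(2)]
          that(3,4) i f]
      unfolding two_level_state_convex_combination .
    have "tr (P i * two_level_state n u w 0 0) = sesq n (P i) w w"
      using tr_mult_two_level_state[OF P_carrier[OF i]] by simp
    also have "\<dots> = 0"
      using uw w by (intro sesq_eq_0_if_mult_mat_vec_eq_0 P_carrier[OF i]) (auto simp: orthonormal_pair_def)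
    finally show "p i f (two_level_state n u w 0 0) = 0"
      using density_two_level_state[OF uw] i f by (intro p_eq_0_if_tr_eq_0) auto
  qed
  show ?thesis using G.eq_diagonal_multiple[OF ac] .
qed

lemma tr_Q_balanced_two_level_state:
  assumes i: "i \<in> I" and j: "j \<in> I" and ij: "i \<noteq> j" and f: "f \<in> F"
    and uw: "orthonormal_pair n u w" and u: "P i *\<^sub>v u = u" and w: "P j *\<^sub>v w = w"
    and c: "qubit_disk (1/2) c"
  shows "tr (Q f * two_level_state n u w (1/2) c)
           = of_real ((p i f (two_level_state n u w 1 0) + p j f (two_level_state n w u 1 0)) / 2)"
proof -
  define D where "D = two_level_state n u w (1/2) c"
  have uC: "u \<in> carrier_vec n" and wC: "w \<in> carrier_vec n" using uw by (auto simp: orthonormal_pair_def)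
  have D: "density n D" unfolding D_def using uw c by (rule density_two_level_state)
  have ku: "P k *\<^sub>v u = 0\<^sub>v n" if "k \<in> I" "k \<noteq> i" for k using P_mult_vec_eq_0[OF i that uC u] .
  have kw: "P k *\<^sub>v w = 0\<^sub>v n" if "k \<in> I" "k \<noteq> j" for k using P_mult_vec_eq_0[OF j that wC w] .
  have "p k f D = 0" if "k \<in> I - {i, j}" for k
  proof -
    from that have k: "k \<in> I" "k \<noteq> i" "k \<noteq> j" by auto
    note Pk = P_carrier[OF k(1)]
    have "tr (P k * D) = 0"
      unfolding D_def tr_mult_two_level_state[OF Pk]
      using sesq_eq_0_if_mult_mat_vec_eq_0[OF Pk uC ku[OF k(1,2)]]
        sesq_eq_0_if_mult_mat_vec_eq_0[OF Pk wC kw[OF k(1,3)]]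
      by simp
    then show ?thesis using D k f by (intro p_eq_0_if_tr_eq_0)
  qed
  then have "(\<Sum>k\<in>I. p k f D) = (\<Sum>k\<in>{i, j}. p k f D)"
    using finite_I i j by (intro sum.mono_neutral_right) auto
  also have "\<dots> = p i f D + p j f D" using ij by simp
  also have "p i f D = 1/2 * p i f (two_level_state n u w 1 0)"
    unfolding D_def by (rule p_two_level_state[OF i f uw kw[OF i ij] c])
  also have "p j f D = 1/2 * p j f (two_level_state n w u 1 0)"
  proof -
    have "two_level_state n w u (1/2) (cnj c) = D"
      using two_level_state_swap[of n w u "1/2" c] by (simp add: D_def)
    moreover have "p j f (two_level_state n w u (1/2) (cnj c)) = 1/2 * p j f (two_level_state n w u 1 0)"
      using c by (intro p_two_level_state[OF j f orthonormal_pair_commute[OF uw] ku[OF j ij[symmetric]]]) simp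
    ultimately show ?thesis by simp
  qed
  finally have "(\<Sum>k\<in>I. p k f D) = (p i f (two_level_state n u w 1 0) + p j f (two_level_state n w u 1 0)) / 2"
    by simp
  then have "tr (Q f * D) = of_real ((p i f (two_level_state n u w 1 0) + p j f (two_level_state n w u 1 0)) / 2)"
    by (metis marginal_Q[OF D f])
  then show ?thesis by (simp only: D_def)
qed

lemma sesq_Q_orthonormal_eq_0:
  assumes i: "i \<in> I" and j: "j \<in> I" and ij: "i \<noteq> j" and f: "f \<in> F"
    and uw: "orthonormal_pair n u w" and u: "P i *\<^sub>v u = u" and w: "P j *\<^sub>v w = w"
  shows "sesq n (Q f) w u = 0"
proof -
  define x where "x = sesq n (Q f) w u"
  define y where "y = sesq n (Q f) u w"
  have vanish: "c * x + cnj c * y = 0" if c: "qubit_disk (1/2) c" for c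
  proof -
    have d0: "qubit_disk (1/2) 0" by simp
    have "tr (Q f * two_level_state n u w (1/2) c) = tr (Q f * two_level_state n u w (1/2) 0)"
      unfolding tr_Q_balanced_two_level_state[OF i j ij f uw u w c]
        tr_Q_balanced_two_level_state[OF i j ij f uw u w d0] ..
    then have "2 * (c * x + cnj c * y) = 0"
      unfolding tr_mult_two_level_state[OF Q_carrier[OF f]] x_def y_def by (simp add: algebra_simps)
    then show ?thesis by (metis mult_eq_0_iff zero_neq_numeral)
  qed
  have "qubit_disk (1/2) (1/2)" "qubit_disk (1/2) (\<i>/2)"
    by (simp_all add: qubit_disk_def norm_divide power2_eq_square)
  from this[THEN vanish] have "1/2 * (x + y) = 0" "\<i>/2 * (x - y) = 0"
    by (simp_all add: algebra_simps)
  then have "x + y = 0" "x - y = 0" by simp_all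
  then show ?thesis unfolding x_def[symmetric] by (simp add: algebra_simps)
qed

lemma sesq_Q_eq_0:
  assumes i: "i \<in> I" and j: "j \<in> I" and ij: "i \<noteq> j" and f: "f \<in> F"
    and y: "y \<in> carrier_vec n" "P i *\<^sub>v y = y" and z: "z \<in> carrier_vec n" "P j *\<^sub>v z = z"
  shows "sesq n (Q f) z y = 0"
proof (cases "y = 0\<^sub>v n \<or> z = 0\<^sub>v n")
  case True
  then show ?thesis by (auto simp: sesq_def intro!: sum.neutral)
next
  case False
  obtain k :: real where k: "k \<noteq> 0" "cinner n (of_real k \<cdot>\<^sub>v y) (of_real k \<cdot>\<^sub>v y) = 1"
    using exists_unit_rescaling[OF y(1)] False by blast
  obtain l :: real where l: "l \<noteq> 0" "cinner n (of_real l \<cdot>\<^sub>v z) (of_real l \<cdot>\<^sub>v z) = 1"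
    using exists_unit_rescaling[OF z(1)] False by blast
  have "cinner n y z = cinner n (P i *\<^sub>v y) z" using y by simp
  also have "\<dots> = cinner n y (P i *\<^sub>v z)" by (rule hermitian_cinner[OF P_hermitian[OF i] y(1) z(1)])
  also have "P i *\<^sub>v z = 0\<^sub>v n" by (rule P_mult_vec_eq_0[OF j i ij z])
  finally have "cinner n y z = 0" by (simp add: cinner_def)
  then have "orthonormal_pair n (of_real k \<cdot>\<^sub>v y) (of_real l \<cdot>\<^sub>v z)"
    using k l y z by (simp add: orthonormal_pair_def cinner_smult)
  moreover have "P i *\<^sub>v (of_real k \<cdot>\<^sub>v y) = of_real k \<cdot>\<^sub>v y" "P j *\<^sub>v (of_real l \<cdot>\<^sub>v z) = of_real l \<cdot>\<^sub>v z"
    using mult_mat_vec[OF P_carrier[OF i] y(1)] mult_mat_vec[OF P_carrier[OF j] z(1)] y z by simp_all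
  ultimately have "sesq n (Q f) (of_real l \<cdot>\<^sub>v z) (of_real k \<cdot>\<^sub>v y) = 0"
    by (rule sesq_Q_orthonormal_eq_0[OF i j ij f])
  then show ?thesis using k l y z by (simp add: sesq_smult)
qed

lemma P_Q_P_eq_0:
  assumes j: "j \<in> I" and k: "k \<in> I" and jk: "j \<noteq> k" and f: "f \<in> F"
  shows "P j * Q f * P k = 0\<^sub>m n n"
proof (rule eq_matI)
  fix r s assume "r < dim_row (0\<^sub>m n n :: complex mat)" "s < dim_col (0\<^sub>m n n :: complex mat)"
  then have r: "r < n" and s: "s < n" by auto
  have "P k *\<^sub>v col (P k) s = col (P k) s"
    using col_mult2[OF P_carrier[OF k] P_carrier[OF k] s] P_idem[OF k] by simp
  moreover have "P j *\<^sub>v col (P j) r = col (P j) r"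
    using col_mult2[OF P_carrier[OF j] P_carrier[OF j] r] P_idem[OF j] by simp
  ultimately have "sesq n (Q f) (col (P j) r) (col (P k) s) = 0"
    using P_carrier[OF j] P_carrier[OF k] by (intro sesq_Q_eq_0[OF k j jk[symmetric] f]) auto
  then show "(P j * Q f * P k) $$ (r,s) = 0\<^sub>m n n $$ (r,s)"
    using hermitian_sandwich_entry[OF P_hermitian[OF j] P_hermitian[OF k] Q_carrier[OF f] r s] r s
    by simp
qed (use P_carrier[OF j] P_carrier[OF k] Q_carrier[OF f] in simp_all)

theorem P_Q_commute:
  assumes "i \<in> I" "f \<in> F"
  shows "P i * Q f = Q f * P i"
proof (rule commute_if_off_diagonal_blocks_zero[OF finite_I assms(1) P_carrier resolution Q_carrier[OF assms(2)]])
  show "P j * Q f * P k = 0\<^sub>m n n" if "j \<in> I" "k \<in> I" "j \<noteq> k" for j k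
    using P_Q_P_eq_0[OF that assms(2)] .
qed

end

lemma joint_distribution_of_channel:
  fixes p :: "'i \<Rightarrow> 'f \<Rightarrow> complex mat \<Rightarrow> real"
  assumes adjE: "is_adjoint n m E Ed"
    and specA: "spectral_decomp n A I a Pr" and specB: "spectral_decomp m B F b Xi"
    and model: "(\<forall>\<rho>. density n \<rho> \<longrightarrow> (\<forall>i\<in>I. \<forall>f\<in>F. 0 \<le> p i f \<rho>)) \<and>
      (\<forall>\<rho>. density n \<rho> \<longrightarrow>
          (\<forall>i\<in>I. complex_of_real (\<Sum>f\<in>F. p i f \<rho>) = tr (Pr i * \<rho>)) \<and>
          (\<forall>f\<in>F. complex_of_real (\<Sum>i\<in>I. p i f \<rho>) = tr (Xi f * E \<rho>))) \<and>
      (\<forall>(K::nat) (w :: nat \<Rightarrow> real) (\<rho>s :: nat \<Rightarrow> complex mat).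
          (\<forall>k<K. 0 \<le> w k \<and> density n (\<rho>s k)) \<and> (\<Sum>k<K. w k) = 1 \<longrightarrow>
          (\<forall>i\<in>I. \<forall>f\<in>F.
             p i f (msum n (\<lambda>k. complex_of_real (w k) \<cdot>\<^sub>m \<rho>s k) {..<K})
               = (\<Sum>k<K. w k * p i f (\<rho>s k))))"
  shows "joint_distribution n I F Pr (\<lambda>f. Ed (Xi f)) p"
proof
  have Xi_carrier: "Xi f \<in> carrier_mat m m" if "f \<in> F" for f
    using specB that by (simp add: spectral_decomp_def projector_def hermitian_def)
  show "finite I" "msum n Pr I = 1\<^sub>m n" using specA by (simp_all add: spectral_decomp_def)
  show "finite F" using specB by (simp add: spectral_decomp_def)
  show "projector n (Pr i)" if "i \<in> I" for i using specA that by (simp add: spectral_decomp_def)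
  show "Pr i * Pr j = 0\<^sub>m n n" if "i \<in> I" "j \<in> I" "i \<noteq> j" for i j
    using specA that by (simp add: spectral_decomp_def)
  show "Ed (Xi f) \<in> carrier_mat n n" if "f \<in> F" for f
    using adjE Xi_carrier[OF that] by (simp add: is_adjoint_def)
  show "0 \<le> p i f \<rho>" if "density n \<rho>" "i \<in> I" "f \<in> F" for \<rho> i f
    using model that by blast
  show "of_real (\<Sum>f\<in>F. p i f \<rho>) = tr (Pr i * \<rho>)" if "density n \<rho>" "i \<in> I" for \<rho> i
    using model that by blast
  show "of_real (\<Sum>i\<in>I. p i f \<rho>) = tr (Ed (Xi f) * \<rho>)" if \<rho>: "density n \<rho>" and f: "f \<in> F" for \<rho> f
  proof -
    have "of_real (\<Sum>i\<in>I. p i f \<rho>) = tr (Xi f * E \<rho>)" using model \<rho> f by blast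
    also have "\<dots> = tr (Ed (Xi f) * \<rho>)"
      using adjE Xi_carrier[OF f] density_carrier[OF \<rho>] by (simp add: is_adjoint_def)
    finally show ?thesis .
  qed
  show "p i f (of_real l \<cdot>\<^sub>m \<rho>1 + of_real (1 - l) \<cdot>\<^sub>m \<rho>2) = l * p i f \<rho>1 + (1 - l) * p i f \<rho>2"
    if "density n \<rho>1" "density n \<rho>2" "0 \<le> l" "l \<le> 1" "i \<in> I" "f \<in> F" for \<rho>1 \<rho>2 l i f
  proof -
    define w where "w = (\<lambda>k::nat. if k = 0 then l else 1 - l)"
    define \<rho>s where "\<rho>s = (\<lambda>k::nat. if k = 0 then \<rho>1 else \<rho>2)"
    have "\<forall>k<2. 0 \<le> w k \<and> density n (\<rho>s k)" "(\<Sum>k<2. w k) = 1"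
      using that by (auto simp: w_def \<rho>s_def numeral_2_eq_2 less_Suc_eq)
    then have "p i f (msum n (\<lambda>k. of_real (w k) \<cdot>\<^sub>m \<rho>s k) {..<2}) = (\<Sum>k<2. w k * p i f (\<rho>s k))"
      using model that by blast
    moreover have "msum n (\<lambda>k. of_real (w k) \<cdot>\<^sub>m \<rho>s k) {..<2} = of_real l \<cdot>\<^sub>m \<rho>1 + of_real (1 - l) \<cdot>\<^sub>m \<rho>2"
      using density_carrier that by (subst msum_lessThan_2) (auto simp: w_def \<rho>s_def)
    ultimately show ?thesis by (simp add: w_def \<rho>s_def numeral_2_eq_2)
  qed
qed

theorem theorem1:
  fixes n m :: nat
    and E Ed :: "complex mat \<Rightarrow> complex mat"
    and A B :: "complex mat"
    and I :: "'i set" and F :: "'f set"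
    and a :: "'i \<Rightarrow> real" and Pr :: "'i \<Rightarrow> complex mat"
    and b :: "'f \<Rightarrow> real" and Xi :: "'f \<Rightarrow> complex mat"
  assumes chan: "quantum_channel n m E"
    and adjE: "is_adjoint n m E Ed"
    and specA: "spectral_decomp n A I a Pr"
    and specB: "spectral_decomp m B F b Xi"
    and noncomm: "\<exists>i\<in>I. \<exists>f\<in>F. Pr i * Ed (Xi f) - Ed (Xi f) * Pr i \<noteq> 0\<^sub>m n n"
  shows "\<not> (\<exists>p :: 'i \<Rightarrow> 'f \<Rightarrow> complex mat \<Rightarrow> real.
      (\<forall>\<rho>. density n \<rho> \<longrightarrow> (\<forall>i\<in>I. \<forall>f\<in>F. 0 \<le> p i f \<rho>)) \<and>
      (\<forall>\<rho>. density n \<rho> \<longrightarrow>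
          (\<forall>i\<in>I. complex_of_real (\<Sum>f\<in>F. p i f \<rho>) = tr (Pr i * \<rho>)) \<and>
          (\<forall>f\<in>F. complex_of_real (\<Sum>i\<in>I. p i f \<rho>) = tr (Xi f * E \<rho>))) \<and>
      (\<forall>(K::nat) (w :: nat \<Rightarrow> real) (\<rho>s :: nat \<Rightarrow> complex mat).
          (\<forall>k<K. 0 \<le> w k \<and> density n (\<rho>s k)) \<and> (\<Sum>k<K. w k) = 1 \<longrightarrow>
          (\<forall>i\<in>I. \<forall>f\<in>F.
             p i f (msum n (\<lambda>k. complex_of_real (w k) \<cdot>\<^sub>m \<rho>s k) {..<K})
               = (\<Sum>k<K. w k * p i f (\<rho>s k)))))"
proof -
  have "\<not> joint_distribution n I F Pr (\<lambda>f. Ed (Xi f)) p" for p :: "'i \<Rightarrow> 'f \<Rightarrow> complex mat \<Rightarrow> real"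
  proof
    assume "joint_distribution n I F Pr (\<lambda>f. Ed (Xi f)) p"
    then interpret joint_distribution n I F Pr "\<lambda>f. Ed (Xi f)" p .
    from noncomm obtain i f where i: "i \<in> I" and f: "f \<in> F"
      and "Pr i * Ed (Xi f) - Ed (Xi f) * Pr i \<noteq> 0\<^sub>m n n" by blast
    moreover have "Pr i * Ed (Xi f) = Ed (Xi f) * Pr i" using P_Q_commute[OF i f] by simp
    moreover have "Pr i * Ed (Xi f) \<in> carrier_mat n n" using P_carrier[OF i] Q_carrier[OF f] by simp
    ultimately show False using minus_r_inv_mat by metis
  qed
  then show ?thesis using joint_distribution_of_channel[OF adjE specA specB] by blast
qed

end
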